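(* The group of units of a cancellative strongly hyperbolic monoid is a (word) hyperbolic group.
   Context: Directed graphs may have loops and multiple edges; $d(u,v)$ is the length of a shortest directed path from $u$ to $v$ ($\infty$ if none). Out-ball $\overrightarrow{\mathcal{B}}_r(x)=\{y : d(x,y)\le r\}$, in-ball $\overleftarrow{\mathcal{B}}_r(x)=\{y : d(y,x)\le r\}$, extended to sets by union. A path $[x_0,\dots,x_n]$ is a geodesic if $n=d(x_0,x_n)$. A directed geodesic triangle is an ordered triple $(p,q,r)$ of geodesics with the end of $p$ equal to the start of $q$ and $p\circ q$ having the same start and end as $r$; it is $\delta$-thin if every vertex of $r$ lies in $\overrightarrow{\mathcal{B}}_\delta(p)\cup\overleftarrow{\mathcal{B}}_\delta(q)$, every vertex of $p$ lies in $\overrightarrow{\mathcal{B}}_\delta(r)\cup\overleftarrow{\mathcal{B}}_\delta(q)$, and every vertex of $q$ lies in $\overrightarrow{\mathcal{B}}_\delta(p)\cup\overleftarrow{\mathcal{B}}_\delta(r)$. A directed graph is strongly $\delta$-hyperbolic if all its directed geodesic triangles are $\delta$-thin. A monoid is strongly hyperbolic if its right Cayley graph (vertex set the monoid, edge $m\to n$ for each generator $a$ with $ma=n$) w.r.t. some finite generating set is strongly $\delta$-hyperbolic for some $\delta\ge0$. The group of units is the set of $x$ for which some $y$ satisfies $xy=yx=1$. *)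

theory Defs
  imports "HOL-Algebra.Group" "HOL-Algebra.Generated_Groups" "HOL-Library.Extended_Nat"
begin

text \<open>Loops and multiple edges are allowed in the paper; multiplicity of edges does not
  affect paths (as vertex sequences), distances or balls, so an edge relation suffices.\<close>

definition dpath :: "'v set \<Rightarrow> ('v \<Rightarrow> 'v \<Rightarrow> bool) \<Rightarrow> 'v list \<Rightarrow> bool" where
  "dpath V E xs \<longleftrightarrow> xs \<noteq> [] \<and> set xs \<subseteq> V \<and>
     (\<forall>i. Suc i < length xs \<longrightarrow> E (xs ! i) (xs ! Suc i))"

definition ddist :: "'v set \<Rightarrow> ('v \<Rightarrow> 'v \<Rightarrow> bool) \<Rightarrow> 'v \<Rightarrow> 'v \<Rightarrow> enat" where
  "ddist V E x y =
     (if \<exists>xs. dpath V E xs \<and> hd xs = x \<and> last xs = y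
      then enat (LEAST n. \<exists>xs. dpath V E xs \<and> hd xs = x \<and> last xs = y \<and> length xs = Suc n)
      else \<infinity>)"

definition dgeodesic :: "'v set \<Rightarrow> ('v \<Rightarrow> 'v \<Rightarrow> bool) \<Rightarrow> 'v list \<Rightarrow> bool" where
  "dgeodesic V E xs \<longleftrightarrow> dpath V E xs \<and> ddist V E (hd xs) (last xs) = enat (length xs - 1)"

definition out_ball :: "'v set \<Rightarrow> ('v \<Rightarrow> 'v \<Rightarrow> bool) \<Rightarrow> nat \<Rightarrow> 'v set \<Rightarrow> 'v set" where
  "out_ball V E r S = {y \<in> V. \<exists>x\<in>S. ddist V E x y \<le> enat r}"

definition in_ball :: "'v set \<Rightarrow> ('v \<Rightarrow> 'v \<Rightarrow> bool) \<Rightarrow> nat \<Rightarrow> 'v set \<Rightarrow> 'v set" where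
  "in_ball V E r S = {y \<in> V. \<exists>x\<in>S. ddist V E y x \<le> enat r}"

definition geodesic_triangle :: "'v set \<Rightarrow> ('v \<Rightarrow> 'v \<Rightarrow> bool) \<Rightarrow> 'v list \<Rightarrow> 'v list \<Rightarrow> 'v list \<Rightarrow> bool" where
  "geodesic_triangle V E p q r \<longleftrightarrow>
     dgeodesic V E p \<and> dgeodesic V E q \<and> dgeodesic V E r \<and>
     last p = hd q \<and> hd r = hd p \<and> last r = last q"

definition thin_triangle :: "'v set \<Rightarrow> ('v \<Rightarrow> 'v \<Rightarrow> bool) \<Rightarrow> nat \<Rightarrow> 'v list \<Rightarrow> 'v list \<Rightarrow> 'v list \<Rightarrow> bool" where
  "thin_triangle V E \<delta> p q r \<longleftrightarrow>
     set r \<subseteq> out_ball V E \<delta> (set p) \<union> in_ball V E \<delta> (set q) \<and>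
     set p \<subseteq> out_ball V E \<delta> (set r) \<union> in_ball V E \<delta> (set q) \<and>
     set q \<subseteq> out_ball V E \<delta> (set p) \<union> in_ball V E \<delta> (set r)"

definition strongly_hyperbolic_graph :: "'v set \<Rightarrow> ('v \<Rightarrow> 'v \<Rightarrow> bool) \<Rightarrow> nat \<Rightarrow> bool" where
  "strongly_hyperbolic_graph V E \<delta> \<longleftrightarrow>
     (\<forall>p q r. geodesic_triangle V E p q r \<longrightarrow> thin_triangle V E \<delta> p q r)"

definition cayley_edge :: "('a, 'b) monoid_scheme \<Rightarrow> 'a set \<Rightarrow> 'a \<Rightarrow> 'a \<Rightarrow> bool" where
  "cayley_edge M A m n \<longleftrightarrow> m \<in> carrier M \<and> (\<exists>a\<in>A. m \<otimes>\<^bsub>M\<^esub> a = n)"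

definition monoid_generates :: "('a, 'b) monoid_scheme \<Rightarrow> 'a set \<Rightarrow> bool" where
  "monoid_generates M A \<longleftrightarrow> A \<subseteq> carrier M \<and>
     (\<forall>m\<in>carrier M. \<exists>ws. set ws \<subseteq> A \<and> m = foldr (\<lambda>a b. a \<otimes>\<^bsub>M\<^esub> b) ws \<one>\<^bsub>M\<^esub>)"

definition cancellative :: "('a, 'b) monoid_scheme \<Rightarrow> bool" where
  "cancellative M \<longleftrightarrow>
     (\<forall>a\<in>carrier M. \<forall>b\<in>carrier M. \<forall>c\<in>carrier M.
        (a \<otimes>\<^bsub>M\<^esub> b = a \<otimes>\<^bsub>M\<^esub> c \<longrightarrow> b = c) \<and>
        (b \<otimes>\<^bsub>M\<^esub> a = c \<otimes>\<^bsub>M\<^esub> a \<longrightarrow> b = c))"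

definition strongly_hyperbolic_monoid :: "('a, 'b) monoid_scheme \<Rightarrow> bool" where
  "strongly_hyperbolic_monoid M \<longleftrightarrow>
     (\<exists>A \<delta>. finite A \<and> monoid_generates M A \<and>
        strongly_hyperbolic_graph (carrier M) (cayley_edge M A) \<delta>)"

text \<open>For a symmetric
  edge relation the directed thinness condition is exactly the Rips condition.\<close>
definition hyperbolic_group :: "('a, 'b) monoid_scheme \<Rightarrow> bool" where
  "hyperbolic_group G \<longleftrightarrow> group G \<and>
     (\<exists>S \<delta>. finite S \<and> S \<subseteq> carrier G \<and> generate G S = carrier G \<and>
        strongly_hyperbolic_graph (carrier G)
          (cayley_edge G (S \<union> m_inv G ` S)) \<delta>)"

end

theory Submission
  imports Defs
begin

text \<open>By cancellativity, a factor of a unit is a unit, so a directed path in the Cayley graph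
  of \<open>M\<close> that ends at a unit runs through units along generators in \<open>S = A \<inter> U\<close>.
  Hence between units the directed word metric \<open>d\<close> of \<open>M\<close> is that of \<open>U\<close> for \<open>S\<close>, and
  triangles of \<open>d\<close>-geodesics in \<open>U\<close> are thin. The word metric \<open>\<rho>\<close> of \<open>U\<close> for \<open>S \<union> S\<inverse>\<close>
  satisfies \<open>\<rho> \<le> d \<le> K \<rho>\<close>, \<open>K\<close> bounding the length of words in \<open>A\<close> for the
  elements of \<open>S\<inverse>\<close>, so \<open>d\<close>-geodesics are \<open>\<rho>\<close>-quasi-geodesics. The Morse lemma, whose
  bisection proof only needs thin triangles of \<open>d\<close>-geodesics, keeps \<open>d\<close>- and
  \<open>\<rho>\<close>-geodesics with common ends uniformly close, so \<open>\<rho>\<close>-geodesic triangles are thin.\<close>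

section \<open>Directed paths and distances\<close>

lemma dpath_singleton [simp]: "dpath V E [a] \<longleftrightarrow> a \<in> V"
  by (simp add: dpath_def)

lemma dpath_Cons_Cons [simp]:
  "dpath V E (a # b # xs) \<longleftrightarrow> a \<in> V \<and> E a b \<and> dpath V E (b # xs)"
  by (auto simp: dpath_def nth_Cons less_Suc_eq_0_disj split: nat.splits)

lemma dpath_set: "dpath V E xs \<Longrightarrow> set xs \<subseteq> V"
  by (simp add: dpath_def)

lemma dpath_nonempty: "dpath V E xs \<Longrightarrow> xs \<noteq> []"
  by (simp add: dpath_def)

lemma set_tl_subset: "set (tl xs) \<subseteq> set xs"
  by (cases xs) auto

lemma last_append_tl: "ys \<noteq> [] \<Longrightarrow> last xs = hd ys \<Longrightarrow> last (xs @ tl ys) = last ys"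
  by (cases ys) auto

lemma dpath_mono:
  "dpath V E xs \<Longrightarrow> (\<And>u v. u \<in> V \<Longrightarrow> E u v \<Longrightarrow> F u v) \<Longrightarrow> dpath V F xs"
  unfolding dpath_def by (meson Suc_lessD nth_mem subsetD)

lemma dpath_append:
  assumes "dpath V E xs" "dpath V E ys" "last xs = hd ys"
  shows "dpath V E (xs @ tl ys)"
  using assms
proof (induction xs rule: induct_list012)
  case 1
  then show ?case by (simp add: dpath_def)
next
  case (2 a)
  then show ?case by (cases ys) auto
next
  case (3 a b xs)
  then show ?case by simp
qed

lemma dpath_drop: "dpath V E xs \<Longrightarrow> n < length xs \<Longrightarrow> dpath V E (drop n xs)"
  by (auto simp: dpath_def dest: in_set_dropD)

lemma dpath_take: "dpath V E xs \<Longrightarrow> 0 < n \<Longrightarrow> dpath V E (take n xs)"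
  by (auto simp: dpath_def dest: in_set_takeD)

lemma dpath_rev:
  assumes "\<And>u v. E u v \<Longrightarrow> E v u"
  shows "dpath V E xs \<Longrightarrow> dpath V E (rev xs)"
proof (induction xs rule: induct_list012)
  case (3 a b xs)
  then have "dpath V E (rev (b # xs) @ tl [b, a])"
    by (intro dpath_append) (auto simp: assms last_rev dest: dpath_set)
  then show ?case by simp
qed (auto simp: dpath_def)

lemma ddist_le_length: "dpath V E xs \<Longrightarrow> ddist V E (hd xs) (last xs) \<le> enat (length xs - 1)"
  unfolding ddist_def
  by (auto intro!: Least_le exI[of _ xs] simp: dpath_def)

lemma ddist_enatE:
  assumes "ddist V E x y = enat n"
  obtains xs where "dpath V E xs" "hd xs = x" "last xs = y" "length xs = Suc n"
proof -
  obtain xs where "dpath V E xs" "hd xs = x" "last xs = y"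
    using assms unfolding ddist_def by (auto split: if_splits)
  then have "\<exists>m xs. dpath V E xs \<and> hd xs = x \<and> last xs = y \<and> length xs = Suc m"
    by (intro exI[of _ "length xs - 1"] exI[of _ xs]) (auto simp: dpath_def)
  from LeastI_ex[OF this] assms that show thesis
    unfolding ddist_def by (auto split: if_splits)
qed

lemma ddist_triangle: "ddist V E x z \<le> ddist V E x y + ddist V E y z"
proof (cases "ddist V E x y" "ddist V E y z" rule: enat2_cases)
  case (enat_enat n m)
  obtain xs where xs: "dpath V E xs" "hd xs = x" "last xs = y" "length xs = Suc n"
    using ddist_enatE[OF enat_enat(1)] .
  obtain ys where ys: "dpath V E ys" "hd ys = y" "last ys = z" "length ys = Suc m"
    using ddist_enatE[OF enat_enat(2)] .
  have "dpath V E (xs @ tl ys)"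
    using xs ys by (intro dpath_append) auto
  from ddist_le_length[OF this] show ?thesis
    using xs ys enat_enat by (cases xs; cases ys) auto
qed auto

lemma ddist_self: "x \<in> V \<Longrightarrow> ddist V E x x = 0"
  using ddist_le_length[of V E "[x]"] by (simp add: zero_enat_def[symmetric])

lemma ddist_edge: "E x y \<Longrightarrow> x \<in> V \<Longrightarrow> y \<in> V \<Longrightarrow> ddist V E x y \<le> 1"
  using ddist_le_length[of V E "[x, y]"] by (simp add: one_enat_def)

lemma ddist_eq_1_imp_edge:
  assumes "ddist V E x y = 1"
  shows "E x y"
proof -
  obtain xs where "dpath V E xs" "hd xs = x" "last xs = y" "length xs = Suc 1"
    using assms by (auto simp: one_enat_def elim: ddist_enatE)
  then show ?thesis
    by (cases xs rule: list.exhaust[case_product list.exhaust]) (auto simp: length_Suc_conv)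
qed

lemma ddist_sym:
  assumes "\<And>u v. E u v \<Longrightarrow> E v u"
  shows "ddist V E x y = ddist V E y x"
proof -
  have le: "ddist V E u v \<le> ddist V E v u" for u v
  proof (cases "ddist V E v u")
    case (enat n)
    then obtain xs where xs: "dpath V E xs" "hd xs = v" "last xs = u" "length xs = Suc n"
      by (rule ddist_enatE)
    from ddist_le_length[OF dpath_rev[OF assms xs(1)]] show ?thesis
      using xs enat by (simp add: hd_rev last_rev)
  qed simp
  show ?thesis using le[of x y] le[of y x] by simp
qed

lemma ddist_nth_le:
  assumes "dpath V E xs" "i \<le> j" "j < length xs"
  shows "ddist V E (xs ! i) (xs ! j) \<le> enat (j - i)"
proof -
  let ?ys = "take (j - i + 1) (drop i xs)"
  have "dpath V E ?ys"
    using assms by (intro dpath_take dpath_drop) auto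
  from ddist_le_length[OF this] show ?thesis
    using assms by (simp add: hd_conv_nth last_conv_nth)
qed

lemma ddist_le_mult_length:
  assumes "dpath W F xs" "W \<subseteq> V" and step: "\<And>u v. u \<in> W \<Longrightarrow> F u v \<Longrightarrow> ddist V E u v \<le> enat K"
  shows "ddist V E (hd xs) (last xs) \<le> enat (K * (length xs - 1))"
  using assms(1)
proof (induction xs rule: induct_list012)
  case 1
  then show ?case by (simp add: dpath_def)
next
  case (2 a)
  then show ?case using assms(2) by (simp add: ddist_self zero_enat_def[symmetric] subset_iff)
next
  case (3 a b xs)
  have "ddist V E a (last (b # xs)) \<le> ddist V E a b + ddist V E b (last (b # xs))"
    by (rule ddist_triangle)
  also have "\<dots> \<le> enat K + enat (K * length xs)"
    using 3 step by (intro add_mono) auto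
  finally show ?case by (simp add: algebra_simps)
qed

lemma dgeodesic_exists:
  assumes "ddist V E x y = enat n"
  shows "\<exists>g. dgeodesic V E g \<and> hd g = x \<and> last g = y"
proof -
  obtain xs where "dpath V E xs" "hd xs = x" "last xs = y" "length xs = Suc n"
    using assms by (rule ddist_enatE)
  then show ?thesis
    using assms by (intro exI[of _ xs]) (auto simp: dgeodesic_def)
qed

lemma dgeodesic_nth:
  assumes g: "dgeodesic V E g" and ij: "i \<le> j" "j < length g"
  shows "ddist V E (g ! i) (g ! j) = enat (j - i)"
proof -
  define n where "n = length g - 1"
  have p: "dpath V E g" and ne: "g \<noteq> []" and gn: "ddist V E (g ! 0) (g ! n) = enat n"
    using g by (auto simp: dgeodesic_def dpath_def n_def hd_conv_nth last_conv_nth)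
  have "enat n \<le>
      ddist V E (g ! 0) (g ! i) + (ddist V E (g ! i) (g ! j) + ddist V E (g ! j) (g ! n))"
    using gn ddist_triangle add_left_mono order_trans by metis
  also have "\<dots> \<le> enat i + (ddist V E (g ! i) (g ! j) + enat (n - j))"
    using ddist_nth_le[OF p, of 0 i] ddist_nth_le[OF p, of j n] ij
    by (intro add_mono order_refl) (auto simp: n_def)
  finally have "enat (j - i) \<le> ddist V E (g ! i) (g ! j)"
    using ij by (cases "ddist V E (g ! i) (g ! j)") (auto simp: n_def)
  then show ?thesis
    using ddist_nth_le[OF p ij] by simp
qed

definition dist_geodesic :: "'a set \<Rightarrow> ('a \<Rightarrow> 'a \<Rightarrow> nat) \<Rightarrow> 'a \<Rightarrow> 'a \<Rightarrow> 'a list \<Rightarrow> bool" where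
  "dist_geodesic X d x y g \<longleftrightarrow> g \<noteq> [] \<and> hd g = x \<and> last g = y \<and> set g \<subseteq> X \<and>
     (\<forall>i j. i \<le> j \<longrightarrow> j < length g \<longrightarrow> d (g ! i) (g ! j) = j - i)"

lemma dgeodesic_iff_dist_geodesic:
  assumes "W \<subseteq> V" "set g \<subseteq> W" and d: "\<And>u v. u \<in> W \<Longrightarrow> v \<in> W \<Longrightarrow> ddist V E u v = enat (d u v)"
  shows "dgeodesic V E g \<longleftrightarrow> dist_geodesic W d (hd g) (last g) g"
proof
  assume g: "dgeodesic V E g"
  show "dist_geodesic W d (hd g) (last g) g"
  proof -
    have "d (g ! i) (g ! j) = j - i" if "i \<le> j" "j < length g" for i j
      using dgeodesic_nth[OF g that] d[of "g ! i" "g ! j"] that assms(2) nth_mem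
      by (metis enat.inject subsetD order.strict_trans1)
    then show ?thesis
      using assms g by (auto simp: dist_geodesic_def dgeodesic_def dpath_def)
  qed
next
  assume g: "dist_geodesic W d (hd g) (last g) g"
  then have nth: "ddist V E (g ! i) (g ! j) = enat (j - i)" if "i \<le> j" "j < length g" for i j
    using that assms(2) g d[of "g ! i" "g ! j"] unfolding dist_geodesic_def
    by (metis nth_mem order.strict_trans1 subsetD)
  have "E (g ! i) (g ! Suc i)" if "Suc i < length g" for i
    using nth[of i "Suc i"] that by (auto simp: one_enat_def intro: ddist_eq_1_imp_edge)
  then show "dgeodesic V E g"
    using g nth[of 0 "length g - 1"] assms(1)
    by (auto simp: dgeodesic_def dpath_def dist_geodesic_def hd_conv_nth last_conv_nth)
qed

lemma dist_geodesic_nth: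
  "dist_geodesic X d x y g \<Longrightarrow> i \<le> j \<Longrightarrow> j < length g \<Longrightarrow> d (g ! i) (g ! j) = j - i"
  by (simp add: dist_geodesic_def)

lemma dist_geodesic_set: "dist_geodesic X d x y g \<Longrightarrow> set g \<subseteq> X"
  by (simp add: dist_geodesic_def)

lemma dist_geodesic_ends:
  assumes "dist_geodesic X d x y g"
  shows "x \<in> set g" "y \<in> set g" "x \<in> X" "y \<in> X"
  using assms by (auto simp: dist_geodesic_def)

lemma dist_geodesic_length:
  assumes "dist_geodesic X d x y g"
  shows "d x y = length g - 1"
  using dist_geodesic_nth[OF assms, of 0 "length g - 1"] assms
  by (auto simp: dist_geodesic_def hd_conv_nth last_conv_nth)

lemma dist_geodesic_mem_le:
  assumes g: "dist_geodesic X d x y g" and v: "v \<in> set g"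
  shows "d x v \<le> d x y" "d v y \<le> d x y"
proof -
  obtain t where "t < length g" "v = g ! t"
    using v by (auto simp: in_set_conv_nth)
  then show "d x v \<le> d x y" "d v y \<le> d x y"
    using dist_geodesic_nth[OF g, of 0 t] dist_geodesic_nth[OF g, of t "length g - 1"]
      dist_geodesic_length[OF g] g by (auto simp: dist_geodesic_def hd_conv_nth last_conv_nth)
qed

lemma dist_geodesic_segment:
  assumes g: "dist_geodesic X d x y g" and ij: "i \<le> j" "j < length g"
  shows "dist_geodesic X d (g ! i) (g ! j) (take (j - i + 1) (drop i g))"
  using assms
  by (auto simp: dist_geodesic_def hd_conv_nth last_conv_nth dest: in_set_takeD in_set_dropD)

lemma dist_geodesic_rev:
  assumes g: "dist_geodesic X d x y g" and sym: "\<And>u v. u \<in> X \<Longrightarrow> v \<in> X \<Longrightarrow> d u v = d v u"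
  shows "dist_geodesic X d y x (rev g)"
proof -
  have "d (rev g ! i) (rev g ! j) = j - i" if "i \<le> j" "j < length g" for i j
  proof -
    have "d (g ! (length g - 1 - j)) (g ! (length g - 1 - i)) = j - i"
      using dist_geodesic_nth[OF g, of "length g - 1 - j" "length g - 1 - i"] that by auto
    moreover have "g ! (length g - 1 - i) \<in> X" "g ! (length g - 1 - j) \<in> X"
      using dist_geodesic_set[OF g] that by auto
    ultimately show ?thesis
      using that sym by (simp add: rev_nth)
  qed
  then show ?thesis
    using g by (auto simp: dist_geodesic_def hd_rev last_rev)
qed

lemma nat_discrete_ivt:
  fixes f :: "nat \<Rightarrow> nat"
  assumes "f 0 \<le> i" "i \<le> f T" and step: "\<And>t. t < T \<Longrightarrow> f (Suc t) \<le> f t + J"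
  shows "\<exists>t\<le>T. i \<le> f t \<and> f t \<le> i + J"
proof -
  define t where "t = (LEAST t. i \<le> f t)"
  have it: "i \<le> f t" and tT: "t \<le> T"
    unfolding t_def using assms(2) by (auto intro: LeastI Least_le)
  show ?thesis
  proof (cases t)
    case 0
    then show ?thesis using assms(1) it by (intro exI[of _ 0]) auto
  next
    case (Suc s)
    then have "f s < i"
      using not_less_Least[of s "\<lambda>t. i \<le> f t"] by (simp add: t_def)
    then show ?thesis
      using it tT step[of s] Suc by (intro exI[of _ t]) auto
  qed
qed

lemma square_le_power2: "4 \<le> m \<Longrightarrow> m * m \<le> (2::nat) ^ m"
proof (induction m rule: dec_induct)
  case (step n)
  have "4 * n \<le> n * n"
    using step(1) by (rule mult_le_mono1)
  moreover have "Suc n * Suc n = n * n + 2 * n + 1"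
    by simp
  ultimately have "Suc n * Suc n \<le> n * n + n * n"
    using step(1) by linarith
  then show ?case using step(3) by simp
qed simp

lemma linear_le_power2: "a + b + 4 \<le> m \<Longrightarrow> a * m + b \<le> (2::nat) ^ m"
proof -
  assume m: "a + b + 4 \<le> m"
  have "a * m + b \<le> (a + b) * m"
    using m by (simp add: algebra_simps)
  also have "\<dots> \<le> m * m"
    using m by (intro mult_le_mono1) simp
  also have "\<dots> \<le> 2 ^ m"
    using m by (intro square_le_power2) simp
  finally show ?thesis .
qed

text \<open>A quantity bounded by \<open>\<delta> log\<^sub>2 (c D) + K\<close> is bounded.\<close>
lemma log_bound_imp_bounded:
  "\<exists>B::nat. \<forall>D::nat. (\<forall>k. c * D \<le> 2 ^ k \<longrightarrow> D \<le> k * \<delta> + K) \<longrightarrow> D \<le> B"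
proof -
  define e where "e = \<delta> + 1"
  define N where "N = c * e + c * (e + K) + 4"
  have large: "c * (e * m + e + K) \<le> 2 ^ m" if "N \<le> m" for m
    using linear_le_power2[of "c * e" "c * (e + K)" m] that
    by (simp add: N_def algebra_simps)
  have "D \<le> K + e * (N + 1)" if H: "\<forall>k. c * D \<le> 2 ^ k \<longrightarrow> D \<le> k * \<delta> + K" for D
  proof (rule ccontr)
    assume DK: "\<not> D \<le> K + e * (N + 1)"
    define m where "m = (D - K) div e"
    have e0: "0 < e" by (simp add: e_def)
    have m1: "e * m \<le> D - K"
      by (simp add: m_def)
    have "D - K = e * m + (D - K) mod e"
      by (simp add: m_def)
    then have m2: "D - K < e * (m + 1)"
      using mod_less_divisor[OF e0, of "D - K"] by simp
    have "e * (N + 1) < e * (m + 1)"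
      using DK m2 by linarith
    then have mN: "N \<le> m" by simp
    have "c * D \<le> c * (e * m + e + K)"
      using m2 by (intro mult_le_mono2) (simp add: algebra_simps)
    also have "\<dots> \<le> 2 ^ m"
      using large[OF mN] .
    finally have "D \<le> m * \<delta> + K"
      using H by blast
    moreover have "m * \<delta> + m \<le> D - K" and "1 \<le> m"
      using m1 mN by (simp_all add: e_def N_def algebra_simps)
    ultimately show False
      using DK by linarith
  qed
  then show ?thesis by blast
qed

section \<open>The Morse lemma for a quasi-metric with thin triangles\<close>

definition nbhd_covers :: "('a \<Rightarrow> 'a \<Rightarrow> nat) \<Rightarrow> nat \<Rightarrow> 'a set \<Rightarrow> 'a set \<Rightarrow> bool" where
  "nbhd_covers \<rho> r A B \<longleftrightarrow> (\<forall>v\<in>B. \<exists>u\<in>A. \<rho> u v \<le> r)"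

definition dist_thin_triangle ::
  "('a \<Rightarrow> 'a \<Rightarrow> nat) \<Rightarrow> nat \<Rightarrow> 'a list \<Rightarrow> 'a list \<Rightarrow> 'a list \<Rightarrow> bool" where
  "dist_thin_triangle \<rho> \<delta> p q r \<longleftrightarrow>
     nbhd_covers \<rho> \<delta> (set p \<union> set q) (set r) \<and>
     nbhd_covers \<rho> \<delta> (set r \<union> set q) (set p) \<and>
     nbhd_covers \<rho> \<delta> (set p \<union> set r) (set q)"

lemma nbhd_covers_mono: "nbhd_covers \<rho> r A B \<Longrightarrow> r \<le> s \<Longrightarrow> nbhd_covers \<rho> s A B"
  by (force simp: nbhd_covers_def)

lemma nbhd_covers_Un:
  "nbhd_covers \<rho> r A B \<Longrightarrow> nbhd_covers \<rho> r A' B' \<Longrightarrow> nbhd_covers \<rho> r (A \<union> A') (B \<union> B')"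
  by (auto simp: nbhd_covers_def)

lemma farthest_point:
  fixes \<rho> :: "'a \<Rightarrow> 'a \<Rightarrow> nat"
  assumes "finite A" "A \<noteq> {}" "finite B" "B \<noteq> {}"
  obtains D v0 where "v0 \<in> B" "nbhd_covers \<rho> D A B" "\<forall>w\<in>A. D \<le> \<rho> w v0"
proof -
  define dist_A where "dist_A v = Min ((\<lambda>w. \<rho> w v) ` A)" for v
  have dist_A_attained: "\<exists>w\<in>A. \<rho> w v = dist_A v" for v
  proof -
    have "dist_A v \<in> (\<lambda>w. \<rho> w v) ` A"
      unfolding dist_A_def using assms by (intro Min_in) auto
    then show ?thesis by auto
  qed
  define D where "D = Max (dist_A ` B)"
  have "D \<in> dist_A ` B"
    unfolding D_def using assms by (intro Max_in) auto
  then obtain v0 where v0: "v0 \<in> B" "dist_A v0 = D"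
    by blast
  have "nbhd_covers \<rho> D A B"
    unfolding nbhd_covers_def
  proof
    fix v assume "v \<in> B"
    then have "dist_A v \<le> D"
      using assms by (simp add: D_def)
    then show "\<exists>u\<in>A. \<rho> u v \<le> D"
      using dist_A_attained[of v] by force
  qed
  moreover have "\<forall>w\<in>A. D \<le> \<rho> w v0"
    using v0(2) assms(1) by (auto simp: dist_A_def)
  ultimately show thesis
    using that v0(1) by blast
qed

text \<open>The distance \<open>d\<close> need not be symmetric; thinness of \<open>d\<close>-geodesic triangles is
  measured with the metric \<open>\<rho>\<close>.\<close>
locale thin_quasi_metric =
  fixes X :: "'a set" and d \<rho> :: "'a \<Rightarrow> 'a \<Rightarrow> nat" and K \<delta> :: nat
  assumes K_pos: "1 \<le> K"
    and rho_le_d: "x \<in> X \<Longrightarrow> y \<in> X \<Longrightarrow> \<rho> x y \<le> d x y"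
    and d_le_rho: "x \<in> X \<Longrightarrow> y \<in> X \<Longrightarrow> d x y \<le> K * \<rho> x y"
    and rho_sym: "x \<in> X \<Longrightarrow> y \<in> X \<Longrightarrow> \<rho> x y = \<rho> y x"
    and rho_triangle: "x \<in> X \<Longrightarrow> y \<in> X \<Longrightarrow> z \<in> X \<Longrightarrow> \<rho> x z \<le> \<rho> x y + \<rho> y z"
    and d_self: "x \<in> X \<Longrightarrow> d x x = 0"
    and d_geodesic_exists: "x \<in> X \<Longrightarrow> y \<in> X \<Longrightarrow> \<exists>g. dist_geodesic X d x y g"
    and rho_geodesic_exists: "x \<in> X \<Longrightarrow> y \<in> X \<Longrightarrow> \<exists>g. dist_geodesic X \<rho> x y g"
    and d_triangles_thin: "dist_geodesic X d x y p \<Longrightarrow> dist_geodesic X d y z q \<Longrightarrow>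
      dist_geodesic X d x z r \<Longrightarrow> dist_thin_triangle \<rho> \<delta> p q r"
begin

abbreviation K_chain :: "'a list \<Rightarrow> bool" where
  "K_chain \<equiv> dpath X (\<lambda>u v. d u v \<le> K)"

lemma rho_self: "x \<in> X \<Longrightarrow> \<rho> x x = 0"
  using rho_le_d[of x x] d_self[of x] by simp

lemma nbhd_covers_trans:
  assumes "nbhd_covers \<rho> r A B" "nbhd_covers \<rho> s B C" "A \<subseteq> X" "B \<subseteq> X" "C \<subseteq> X"
  shows "nbhd_covers \<rho> (r + s) A C"
  unfolding nbhd_covers_def
proof
  fix w assume "w \<in> C"
  then obtain v where v: "v \<in> B" "\<rho> v w \<le> s"
    using assms(2) unfolding nbhd_covers_def by blast
  then obtain u where u: "u \<in> A" "\<rho> u v \<le> r"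
    using assms(1) unfolding nbhd_covers_def by blast
  have "\<rho> u w \<le> \<rho> u v + \<rho> v w"
    using u v \<open>w \<in> C\<close> assms(3-5) by (intro rho_triangle) auto
  then show "\<exists>u\<in>A. \<rho> u w \<le> r + s"
    using u v by (intro bexI[of _ u]) auto
qed

text \<open>Bisection: a \<open>d\<close>-geodesic between the ends of a chain of length \<open>\<le> 2\<^sup>k + 1\<close>
  stays \<open>(k \<delta> + K)\<close>-close to the chain, by thinness of the triangle through its midpoint.\<close>
lemma chain_near_d_geodesic:
  "K_chain cs \<Longrightarrow> length cs \<le> 2 ^ k + 1 \<Longrightarrow> dist_geodesic X d (hd cs) (last cs) g \<Longrightarrow>
    v \<in> set g \<Longrightarrow> \<exists>c\<in>set cs. \<rho> v c \<le> k * \<delta> + K"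
proof (induction k arbitrary: cs g v)
  case 0
  have ends: "hd cs \<in> X" "v \<in> X"
    using dist_geodesic_ends(3)[OF 0(3)] dist_geodesic_set[OF 0(3)] 0(4) by auto
  have "d (hd cs) (last cs) \<le> K"
    using 0(1,2) d_self by (cases cs; cases "tl cs") (auto simp: dpath_def)
  then have "\<rho> v (hd cs) \<le> K"
    using dist_geodesic_mem_le(1)[OF 0(3,4)] rho_le_d[OF ends] rho_sym[OF ends] by simp
  then show ?case
    using dpath_nonempty[OF 0(1)] by auto
next
  case (Suc k)
  define m where "m = min (2 ^ k) (length cs - 1)"
  let ?c1 = "take (m + 1) cs" and ?c2 = "drop m cs"
  have ne: "cs \<noteq> []"
    using dpath_nonempty[OF Suc.prems(1)] .
  then have m: "m < length cs"
    by (simp add: m_def min_less_iff_disj)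
  have X: "hd cs \<in> X" "cs ! m \<in> X" "last cs \<in> X" "v \<in> X"
    using dpath_set[OF Suc.prems(1)] ne m dist_geodesic_set[OF Suc.prems(3)] Suc.prems(4) by auto
  obtain g1 g2 where g1: "dist_geodesic X d (hd cs) (cs ! m) g1"
    and g2: "dist_geodesic X d (cs ! m) (last cs) g2"
    using d_geodesic_exists X by meson
  have "nbhd_covers \<rho> \<delta> (set g1 \<union> set g2) (set g)"
    using d_triangles_thin[OF g1 g2 Suc.prems(3)] by (simp add: dist_thin_triangle_def)
  then obtain u where u: "u \<in> set g1 \<union> set g2" "\<rho> u v \<le> \<delta>"
    using Suc.prems(4) unfolding nbhd_covers_def by blast
  have c1: "K_chain ?c1" "length ?c1 \<le> 2 ^ k + 1" "hd ?c1 = hd cs" "last ?c1 = cs ! m"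
    using dpath_take[OF Suc.prems(1), of "m + 1"] m
      take_Suc_conv_app_nth[OF m] hd_take[of "m + 1" cs] by (auto simp: m_def)
  have c2: "K_chain ?c2" "length ?c2 \<le> 2 ^ k + 1" "hd ?c2 = cs ! m" "last ?c2 = last cs"
    using dpath_drop[OF Suc.prems(1)] m Suc.prems(2) by (auto simp: m_def hd_drop_conv_nth)
  obtain c where c: "c \<in> set cs" "\<rho> u c \<le> k * \<delta> + K"
    using u(1) Suc.IH[OF c1(1,2), of g1 u] Suc.IH[OF c2(1,2), of g2 u] g1 g2 c1(3,4) c2(3,4)
    by (auto dest: in_set_takeD in_set_dropD)
  have uX: "u \<in> X" "c \<in> X"
    using u(1) c(1) dist_geodesic_set[OF g1] dist_geodesic_set[OF g2] dpath_set[OF Suc.prems(1)]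
    by auto
  have "\<rho> v c \<le> \<rho> v u + \<rho> u c"
    using rho_triangle X uX by blast
  then show ?case
    using u(2) c rho_sym[OF uX(1) X(4)] by (intro bexI[of _ c]) auto
qed

lemma rho_geodesic_K_chain:
  assumes P: "dist_geodesic X \<rho> x y P"
  shows "K_chain P"
proof -
  have "d (P ! i) (P ! Suc i) \<le> K" if i: "Suc i < length P" for i
  proof -
    have "P ! i \<in> X" "P ! Suc i \<in> X"
      using dist_geodesic_set[OF P] i by (meson Suc_lessD nth_mem subsetD)+
    then show ?thesis
      using d_le_rho[of "P ! i" "P ! Suc i"] dist_geodesic_nth[OF P, of i "Suc i"] i by simp
  qed
  then show ?thesis
    using P by (simp add: dpath_def dist_geodesic_def)
qed

lemma rho_geodesic_nth:
  assumes P: "dist_geodesic X \<rho> x y P" and "i < length P" "j < length P"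
  shows "\<rho> (P ! i) (P ! j) = (if i \<le> j then j - i else i - j)"
proof -
  have "P ! i \<in> X" "P ! j \<in> X"
    using dist_geodesic_set[OF P] assms(2,3) by (meson nth_mem subsetD)+
  then show ?thesis
    using dist_geodesic_nth[OF P, of i j] dist_geodesic_nth[OF P, of j i] assms rho_sym by auto
qed

lemma rho_geodesic_between:
  assumes P: "dist_geodesic X \<rho> x y P" and "a < length P" "b < length P"
  obtains s where "dist_geodesic X \<rho> (P ! a) (P ! b) s" "set s \<subseteq> set P"
proof (cases "a \<le> b")
  case True
  have "set (take (b - a + 1) (drop a P)) \<subseteq> set P"
    by (auto dest: in_set_takeD in_set_dropD)
  then show ?thesis
    using that dist_geodesic_segment[OF P True assms(3)] by blast
next
  case False
  have "dist_geodesic X \<rho> (P ! a) (P ! b) (rev (take (a - b + 1) (drop b P)))"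
    using dist_geodesic_segment[OF P _ assms(2), of b] False rho_sym
    by (intro dist_geodesic_rev) auto
  moreover have "set (rev (take (a - b + 1) (drop b P))) \<subseteq> set P"
    by (auto dest: in_set_takeD in_set_dropD)
  ultimately show ?thesis
    using that by blast
qed

lemma rho_geodesic_stays_far:
  assumes s: "dist_geodesic X \<rho> a b s" and "w \<in> set s" "v \<in> X" "D + \<rho> a b \<le> \<rho> v a"
  shows "D \<le> \<rho> v w"
proof -
  have X: "a \<in> X" "w \<in> X"
    using dist_geodesic_ends(3)[OF s] dist_geodesic_set[OF s] assms(2) by auto
  have "\<rho> v a \<le> \<rho> v w + \<rho> w a"
    using X \<open>v \<in> X\<close> by (intro rho_triangle)
  moreover have "\<rho> w a \<le> \<rho> a b"
    using dist_geodesic_mem_le(1)[OF s \<open>w \<in> set s\<close>] rho_sym[OF X] by simp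
  ultimately show ?thesis using assms(4) by linarith
qed

lemma detour_chain:
  assumes P: "dist_geodesic X \<rho> x y P" and ab: "a < length P" "b < length P"
    and X: "u1 \<in> X" "u2 \<in> X" "v \<in> X"
    and far_P: "\<forall>w\<in>set P. D \<le> \<rho> v w"
    and far_y: "D + \<rho> u1 (P ! a) \<le> \<rho> v u1" and far_z: "D + \<rho> u2 (P ! b) \<le> \<rho> v u2"
  obtains cs where "K_chain cs" "hd cs = u1" "last cs = u2" "\<forall>w\<in>set cs. D \<le> \<rho> v w"
    "length cs \<le> \<rho> u1 (P ! a) + \<rho> (P ! a) (P ! b) + \<rho> u2 (P ! b) + 1"
proof -
  have PX: "P ! a \<in> X" "P ! b \<in> X"
    using dist_geodesic_set[OF P] ab by auto
  obtain s1 where s1: "dist_geodesic X \<rho> u1 (P ! a) s1"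
    using rho_geodesic_exists X PX by blast
  obtain s2 where s2: "dist_geodesic X \<rho> (P ! a) (P ! b) s2" "set s2 \<subseteq> set P"
    using rho_geodesic_between[OF P ab] .
  obtain s3 where s3: "dist_geodesic X \<rho> u2 (P ! b) s3"
    using rho_geodesic_exists X PX by blast
  have s3': "dist_geodesic X \<rho> (P ! b) u2 (rev s3)"
    using s3 rho_sym by (rule dist_geodesic_rev)
  define cs where "cs = (s1 @ tl s2) @ tl (rev s3)"
  have ne: "s1 \<noteq> []" "s2 \<noteq> []" "s3 \<noteq> []"
    using s1 s2 s3 by (auto simp: dist_geodesic_def)
  have joint: "last (s1 @ tl s2) = P ! b"
    using s1 s2 ne by (simp add: last_append_tl dist_geodesic_def)
  have "K_chain cs"
    unfolding cs_def using s1 s2 s3' ne joint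
    by (intro dpath_append rho_geodesic_K_chain) (auto simp: dist_geodesic_def)
  moreover have "hd cs = u1" "last cs = u2"
  proof -
    have "last cs = last (rev s3)"
      unfolding cs_def using ne joint s3' by (intro last_append_tl) (auto simp: dist_geodesic_def)
    then show "hd cs = u1" "last cs = u2"
      using s1 s3' ne by (auto simp: cs_def dist_geodesic_def)
  qed
  moreover have "\<forall>w\<in>set cs. D \<le> \<rho> v w"
  proof
    fix w assume "w \<in> set cs"
    then have "w \<in> set s1 \<or> w \<in> set P \<or> w \<in> set s3"
      using s2(2) set_tl_subset[of s2] set_tl_subset[of "rev s3"] by (auto simp: cs_def)
    then show "D \<le> \<rho> v w"
      using rho_geodesic_stays_far[OF s1 _ X(3) far_y, of w]
        rho_geodesic_stays_far[OF s3 _ X(3) far_z, of w]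
        far_P by auto
  qed
  moreover have "length cs \<le> \<rho> u1 (P ! a) + \<rho> (P ! a) (P ! b) + \<rho> u2 (P ! b) + 1"
    using dist_geodesic_length[OF s1] dist_geodesic_length[OF s2(1)] dist_geodesic_length[OF s3] ne
    by (simp add: cs_def)
  ultimately show ?thesis using that by blast
qed

lemma d_geodesic_spread:
  assumes g: "dist_geodesic X d x y g" and t0: "t0 < length g"
  shows "r \<le> \<rho> (g ! t0) (g ! (t0 - K * r)) \<or> g ! (t0 - K * r) = x"
    and "r \<le> \<rho> (g ! t0) (g ! min (t0 + K * r) (length g - 1)) \<or>
      g ! min (t0 + K * r) (length g - 1) = y"
proof -
  have spread: "r \<le> \<rho> (g ! i) (g ! j)" if ij: "i \<le> j" "j < length g" "K * r \<le> j - i" for i j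
  proof -
    have X: "g ! i \<in> X" "g ! j \<in> X"
      using dist_geodesic_set[OF g] ij by (meson le_less_trans nth_mem subsetD)+
    have "K * r \<le> K * \<rho> (g ! i) (g ! j)"
      using d_le_rho[OF X] dist_geodesic_nth[OF g ij(1,2)] ij(3) by linarith
    then show ?thesis
      using K_pos by simp
  qed
  have ends: "g ! 0 = x" "g ! (length g - 1) = y"
    using g by (auto simp: dist_geodesic_def hd_conv_nth last_conv_nth)
  have "g ! t0 \<in> X" "g ! (t0 - K * r) \<in> X"
    using dist_geodesic_set[OF g] t0 by (meson diff_le_self le_less_trans nth_mem subsetD)+
  then show "r \<le> \<rho> (g ! t0) (g ! (t0 - K * r)) \<or> g ! (t0 - K * r) = x"
    using spread[of "t0 - K * r" t0] t0 rho_sym ends(1) by (cases "K * r \<le> t0") auto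
  show "r \<le> \<rho> (g ! t0) (g ! min (t0 + K * r) (length g - 1)) \<or>
      g ! min (t0 + K * r) (length g - 1) = y"
    using spread[of t0 "t0 + K * r"] t0 ends(2) by (cases "t0 + K * r \<le> length g - 1") auto
qed

lemma nearest_point_on_rho_geodesic:
  assumes P: "dist_geodesic X \<rho> x y P" and e: "e \<in> X" "\<exists>u\<in>set P. \<rho> u e \<le> D"
    and far_P: "\<forall>w\<in>set P. D \<le> \<rho> v w" and far_e: "2 * D \<le> \<rho> v e \<or> e \<in> set P"
  obtains a where "a < length P" "\<rho> e (P ! a) \<le> D" "D + \<rho> e (P ! a) \<le> \<rho> v e"
proof (cases "e \<in> set P")
  case True
  then obtain a where "a < length P" "P ! a = e"
    by (auto simp: in_set_conv_nth)
  then show ?thesis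
    using that far_P True rho_self[OF e(1)] by auto
next
  case False
  obtain a where a: "a < length P" "\<rho> (P ! a) e \<le> D"
    using e(2) by (auto simp: in_set_conv_nth)
  moreover have "\<rho> e (P ! a) = \<rho> (P ! a) e"
    using a(1) dist_geodesic_set[OF P] e(1) by (intro rho_sym) auto
  ultimately show ?thesis
    using that far_e False by simp
qed

text \<open>A detour from \<open>u\<^sub>1\<close> through \<open>P\<close> to \<open>u\<^sub>2\<close> avoids the \<open>D\<close>-ball around \<open>v\<^sub>0\<close>,
  yet by bisection the \<open>d\<close>-geodesic from \<open>u\<^sub>1\<close> to \<open>u\<^sub>2\<close> through \<open>v\<^sub>0\<close> stays logarithmically
  close to it.\<close>
lemma detour_log_bound:
  assumes P: "dist_geodesic X \<rho> x y P" and g: "dist_geodesic X d u1 u2 g" "v0 \<in> set g"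
    and far_P: "\<forall>w\<in>set P. D \<le> \<rho> v0 w"
    and a: "a < length P" "\<rho> u1 (P ! a) \<le> D" "D + \<rho> u1 (P ! a) \<le> \<rho> v0 u1"
    and b: "b < length P" "\<rho> u2 (P ! b) \<le> D" "D + \<rho> u2 (P ! b) \<le> \<rho> v0 u2"
    and k: "4 * D + d u1 u2 \<le> 2 ^ k"
  shows "D \<le> k * \<delta> + K"
proof -
  have X: "u1 \<in> X" "u2 \<in> X" "v0 \<in> X" "P ! a \<in> X" "P ! b \<in> X"
    using dist_geodesic_ends[OF g(1)] dist_geodesic_set[OF g(1)] g(2) dist_geodesic_set[OF P] a b
    by auto
  obtain cs where cs: "K_chain cs" "hd cs = u1" "last cs = u2" "\<forall>w\<in>set cs. D \<le> \<rho> v0 w"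
    "length cs \<le> \<rho> u1 (P ! a) + \<rho> (P ! a) (P ! b) + \<rho> u2 (P ! b) + 1"
    using detour_chain[OF P a(1) b(1) X(1-3) far_P a(3) b(3)] .
  have "\<rho> (P ! a) (P ! b) \<le> \<rho> (P ! a) u1 + (\<rho> u1 u2 + \<rho> u2 (P ! b))"
    using rho_triangle[OF X(4,1,5)] rho_triangle[OF X(1,2,5)] by linarith
  then have "\<rho> (P ! a) (P ! b) \<le> \<rho> u1 (P ! a) + d u1 u2 + \<rho> u2 (P ! b)"
    using rho_sym[OF X(4,1)] rho_le_d[OF X(1,2)] by linarith
  then have "length cs \<le> 2 ^ k + 1"
    using cs(5) a(2) b(2) k by linarith
  then obtain c where "c \<in> set cs" "\<rho> v0 c \<le> k * \<delta> + K"
    using chain_near_d_geodesic[OF cs(1)] g cs(2,3) by blast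
  then show ?thesis
    using cs(4) by fastforce
qed

text \<open>The core of the Morse lemma: if \<open>g\<close> lies in the \<open>D\<close>-neighbourhood of \<open>P\<close> but
  \<open>v\<^sub>0 \<in> g\<close> is \<open>D\<close>-far from \<open>P\<close>, the points of \<open>g\<close> at \<open>d\<close>-distance \<open>2 K D\<close> before and
  after \<open>v\<^sub>0\<close> (or the ends of \<open>g\<close>) are far enough from \<open>v\<^sub>0\<close> for a detour through \<open>P\<close>,
  so \<open>D = O(log D)\<close>.\<close>
lemma morse_bisection_bound:
  assumes P: "dist_geodesic X \<rho> x y P" and g: "dist_geodesic X d x y g"
    and near: "nbhd_covers \<rho> D (set P) (set g)"
    and v0: "v0 \<in> set g" and far_P: "\<forall>w\<in>set P. D \<le> \<rho> v0 w"
    and k: "(4 + 4 * K) * D \<le> 2 ^ k"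
  shows "D \<le> k * \<delta> + K"
proof -
  obtain t0 where t0: "t0 < length g" "g ! t0 = v0"
    using v0 by (auto simp: in_set_conv_nth)
  define t1 t2 where "t1 = t0 - K * (2 * D)" and "t2 = min (t0 + K * (2 * D)) (length g - 1)"
  have t: "t1 \<le> t0" "t0 \<le> t2" "t2 < length g" "t2 - t1 \<le> 4 * K * D"
    using t0 by (auto simp: t1_def t2_def)
  have X: "g ! t1 \<in> X" "g ! t2 \<in> X"
    using dist_geodesic_set[OF g] t by auto
  have near_g: "\<exists>u\<in>set P. \<rho> u (g ! t) \<le> D" if "t < length g" for t
    using near that by (simp add: nbhd_covers_def)
  have "2 * D \<le> \<rho> v0 (g ! t1) \<or> g ! t1 \<in> set P"
    using d_geodesic_spread(1)[OF g t0(1), of "2 * D"] dist_geodesic_ends(1)[OF P]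
    by (auto simp: t1_def t0(2))
  then obtain a where a: "a < length P" "\<rho> (g ! t1) (P ! a) \<le> D"
    "D + \<rho> (g ! t1) (P ! a) \<le> \<rho> v0 (g ! t1)"
    using nearest_point_on_rho_geodesic[OF P X(1) near_g far_P] t by auto
  have "2 * D \<le> \<rho> v0 (g ! t2) \<or> g ! t2 \<in> set P"
    using d_geodesic_spread(2)[OF g t0(1), of "2 * D"] dist_geodesic_ends(2)[OF P]
    by (auto simp: t2_def t0(2))
  then obtain b where b: "b < length P" "\<rho> (g ! t2) (P ! b) \<le> D"
    "D + \<rho> (g ! t2) (P ! b) \<le> \<rho> v0 (g ! t2)"
    using nearest_point_on_rho_geodesic[OF P X(2) near_g far_P] t by auto
  let ?g' = "take (t2 - t1 + 1) (drop t1 g)"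
  have g': "dist_geodesic X d (g ! t1) (g ! t2) ?g'"
    using dist_geodesic_segment[OF g, of t1 t2] t by simp
  have "?g' ! (t0 - t1) = v0" "t0 - t1 < length ?g'"
    using t t0 by auto
  then have "v0 \<in> set ?g'"
    by (metis nth_mem)
  moreover have "4 * D + d (g ! t1) (g ! t2) \<le> 2 ^ k"
    using dist_geodesic_nth[OF g, of t1 t2] t k by (simp add: algebra_simps)
  ultimately show ?thesis
    using detour_log_bound[OF P g' _ far_P a b] by blast
qed

lemma d_geodesic_near_rho_geodesic:
  obtains B where "\<And>x y P g. dist_geodesic X \<rho> x y P \<Longrightarrow> dist_geodesic X d x y g \<Longrightarrow>
    nbhd_covers \<rho> B (set P) (set g)"
proof -
  obtain B where B: "\<And>D. \<forall>k. (4 + 4 * K) * D \<le> 2 ^ k \<longrightarrow> D \<le> k * \<delta> + K \<Longrightarrow> D \<le> B"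
    using log_bound_imp_bounded by blast
  have "nbhd_covers \<rho> B (set P) (set g)"
    if P: "dist_geodesic X \<rho> x y P" and g: "dist_geodesic X d x y g" for x y P g
  proof -
    have ne: "set P \<noteq> {}" "set g \<noteq> {}"
      using P g by (auto simp: dist_geodesic_def)
    obtain v0 D where v0: "v0 \<in> set g" and near: "nbhd_covers \<rho> D (set P) (set g)"
      and far: "\<forall>w\<in>set P. D \<le> \<rho> w v0"
      using farthest_point[OF finite_set ne(1) finite_set ne(2), of \<rho>] by blast
    have "\<forall>w\<in>set P. D \<le> \<rho> v0 w"
      using far v0 rho_sym dist_geodesic_set[OF P] dist_geodesic_set[OF g] by (metis subsetD)
    then have "D \<le> B"
      using B morse_bisection_bound[OF P g near v0] by blast
    with near show ?thesis
      by (rule nbhd_covers_mono)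
  qed
  then show thesis
    using that by blast
qed

lemma rho_geodesic_projection:
  assumes P: "dist_geodesic X \<rho> x y P" and g: "dist_geodesic X d x y g"
    and near: "nbhd_covers \<rho> B (set P) (set g)"
  obtains \<pi> where "\<And>t. t < length g \<Longrightarrow> \<pi> t < length P \<and> \<rho> (P ! \<pi> t) (g ! t) \<le> B"
    "\<pi> 0 = 0" "\<pi> (length g - 1) = length P - 1"
    "\<And>t. Suc t < length g \<Longrightarrow> \<pi> (Suc t) \<le> \<pi> t + (2 * B + 1)"
proof -
  define n T where "n = length P - 1" and "T = length g - 1"
  have ends: "P ! 0 = x" "P ! n = y" "g ! 0 = x" "g ! T = y" "T < length g" "n < length P"
    using P g by (auto simp: dist_geodesic_def n_def T_def hd_conv_nth last_conv_nth)
  have xy: "\<rho> x x = 0" "\<rho> y y = 0" "T = 0 \<Longrightarrow> n = 0"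
    using rho_self dist_geodesic_ends[OF P] dist_geodesic_length[OF P] ends by auto
  have "\<exists>j. j < length P \<and> \<rho> (P ! j) (g ! t) \<le> B \<and> (t = 0 \<longrightarrow> j = 0) \<and> (t = T \<longrightarrow> j = n)"
    if "t < length g" for t
  proof (cases "t = 0 \<or> t = T")
    case True
    then show ?thesis
      using ends xy by (intro exI[of _ "if t = 0 then 0 else n"]) auto
  next
    case False
    then have "\<exists>u\<in>set P. \<rho> u (g ! t) \<le> B"
      using near that by (simp add: nbhd_covers_def)
    then show ?thesis
      using False by (auto simp: in_set_conv_nth)
  qed
  then obtain \<pi> where \<pi>: "\<And>t. t < length g \<Longrightarrow> \<pi> t < length P \<and> \<rho> (P ! \<pi> t) (g ! t) \<le> B \<and>
      (t = 0 \<longrightarrow> \<pi> t = 0) \<and> (t = T \<longrightarrow> \<pi> t = n)"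
    by metis
  have "\<pi> (Suc t) \<le> \<pi> t + (2 * B + 1)" if t: "Suc t < length g" for t
  proof -
    have X: "g ! t \<in> X" "g ! Suc t \<in> X" "P ! \<pi> t \<in> X" "P ! \<pi> (Suc t) \<in> X"
      using t \<pi>[of t] \<pi>[of "Suc t"] dist_geodesic_set[OF g] dist_geodesic_set[OF P] by auto
    have "\<rho> (g ! t) (g ! Suc t) \<le> 1"
      using rho_le_d[OF X(1,2)] dist_geodesic_nth[OF g, of t "Suc t"] t by simp
    moreover have "\<rho> (P ! \<pi> t) (P ! \<pi> (Suc t))
        \<le> \<rho> (P ! \<pi> t) (g ! t) + (\<rho> (g ! t) (g ! Suc t) + \<rho> (g ! Suc t) (P ! \<pi> (Suc t)))"
      using rho_triangle[OF X(3,1,4)] rho_triangle[OF X(1,2,4)] by linarith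
    ultimately have "\<rho> (P ! \<pi> t) (P ! \<pi> (Suc t)) \<le> 2 * B + 1"
      using \<pi>[of t] \<pi>[of "Suc t"] t rho_sym[OF X(2,4)] by simp
    then show ?thesis
      using rho_geodesic_nth[OF P, of "\<pi> t" "\<pi> (Suc t)"] \<pi>[of t] \<pi>[of "Suc t"] t
      by (auto split: if_splits)
  qed
  moreover have "\<pi> 0 = 0"
    using \<pi>[of 0] g by (simp add: dist_geodesic_def)
  moreover have "\<pi> T = n"
    using \<pi>[of T] ends(5) by simp
  ultimately show thesis
    using that[of \<pi>] \<pi> by (simp add: T_def n_def)
qed

lemma rho_geodesic_near_d_geodesic:
  assumes P: "dist_geodesic X \<rho> x y P" and g: "dist_geodesic X d x y g"
    and near: "nbhd_covers \<rho> B (set P) (set g)"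
  shows "nbhd_covers \<rho> (3 * B + 1) (set g) (set P)"
  unfolding nbhd_covers_def
proof
  obtain \<pi> where \<pi>: "\<And>t. t < length g \<Longrightarrow> \<pi> t < length P \<and> \<rho> (P ! \<pi> t) (g ! t) \<le> B"
    "\<pi> 0 = 0" "\<pi> (length g - 1) = length P - 1"
    "\<And>t. Suc t < length g \<Longrightarrow> \<pi> (Suc t) \<le> \<pi> t + (2 * B + 1)"
    using rho_geodesic_projection[OF P g near] by blast
  have ne: "g \<noteq> []"
    using g by (simp add: dist_geodesic_def)
  fix w assume "w \<in> set P"
  then obtain i where i: "i < length P" "P ! i = w"
    by (auto simp: in_set_conv_nth)
  have "\<exists>t\<le>length g - 1. i \<le> \<pi> t \<and> \<pi> t \<le> i + (2 * B + 1)"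
    by (rule nat_discrete_ivt) (use \<pi>(2-4) i(1) in auto)
  then obtain t where "t \<le> length g - 1" and t: "i \<le> \<pi> t" "\<pi> t \<le> i + (2 * B + 1)"
    by blast
  then have tg: "t < length g"
    using ne by (cases g) auto
  have X: "g ! t \<in> X" "P ! \<pi> t \<in> X" "w \<in> X"
    using \<pi>(1)[OF tg] tg i dist_geodesic_set[OF P] dist_geodesic_set[OF g]
    by (meson nth_mem subsetD)+
  have "\<rho> (P ! \<pi> t) w \<le> 2 * B + 1"
    using rho_geodesic_nth[OF P, of "\<pi> t" i] \<pi>(1)[OF tg] t i by auto
  moreover have "\<rho> (g ! t) w \<le> \<rho> (g ! t) (P ! \<pi> t) + \<rho> (P ! \<pi> t) w"
    using rho_triangle[OF X] .
  ultimately have "\<rho> (g ! t) w \<le> 3 * B + 1"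
    using \<pi>(1)[OF tg] rho_sym[OF X(1,2)] by simp
  then show "\<exists>u\<in>set g. \<rho> u w \<le> 3 * B + 1"
    using tg by (intro bexI[of _ "g ! t"]) auto
qed

lemma morse_stability:
  obtains B where "\<And>x y P g. dist_geodesic X \<rho> x y P \<Longrightarrow> dist_geodesic X d x y g \<Longrightarrow>
    nbhd_covers \<rho> B (set P) (set g) \<and> nbhd_covers \<rho> B (set g) (set P)"
proof -
  obtain B where "\<And>x y P g. dist_geodesic X \<rho> x y P \<Longrightarrow> dist_geodesic X d x y g \<Longrightarrow>
      nbhd_covers \<rho> B (set P) (set g)"
    using d_geodesic_near_rho_geodesic by blast
  then show thesis
    using that[of "3 * B + 1"] rho_geodesic_near_d_geodesic nbhd_covers_mono[of \<rho> B _ _ "3 * B + 1"]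
    by simp
qed

theorem rho_geodesic_triangles_thin:
  obtains \<delta>' where "\<And>x y z p q r. dist_geodesic X \<rho> x y p \<Longrightarrow> dist_geodesic X \<rho> y z q \<Longrightarrow>
    dist_geodesic X \<rho> x z r \<Longrightarrow> dist_thin_triangle \<rho> \<delta>' p q r"
proof -
  obtain B where B: "\<And>x y P g. dist_geodesic X \<rho> x y P \<Longrightarrow> dist_geodesic X d x y g \<Longrightarrow>
      nbhd_covers \<rho> B (set P) (set g) \<and> nbhd_covers \<rho> B (set g) (set P)"
    using morse_stability by blast
  have side: "nbhd_covers \<rho> (B + \<delta> + B) (set a \<union> set b) (set c)"
    if "dist_geodesic X \<rho> xa ya a" "dist_geodesic X d xa ya ga"
      "dist_geodesic X \<rho> xb yb b" "dist_geodesic X d xb yb gb"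
      "dist_geodesic X \<rho> xc yc c" "dist_geodesic X d xc yc gc"
      "nbhd_covers \<rho> \<delta> (set ga \<union> set gb) (set gc)"
    for xa ya a ga xb yb b gb xc yc c gc
  proof -
    have sub: "set a \<subseteq> X" "set b \<subseteq> X" "set c \<subseteq> X" "set ga \<subseteq> X" "set gb \<subseteq> X" "set gc \<subseteq> X"
      using that(1-6) by (simp_all add: dist_geodesic_def)
    have "nbhd_covers \<rho> B (set a \<union> set b) (set ga \<union> set gb)"
      using B that(1-4) by (intro nbhd_covers_Un) blast+
    then have "nbhd_covers \<rho> (B + \<delta>) (set a \<union> set b) (set gc)"
      using nbhd_covers_trans[OF _ that(7)] sub by simp
    then show ?thesis
      using nbhd_covers_trans[OF _ conjunct2[OF B[OF that(5,6)]]] sub by simp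
  qed
  have "dist_thin_triangle \<rho> (B + \<delta> + B) p q r"
    if p: "dist_geodesic X \<rho> x y p" and q: "dist_geodesic X \<rho> y z q"
      and r: "dist_geodesic X \<rho> x z r"
    for x y z p q r
  proof -
    have "x \<in> X" "y \<in> X" "z \<in> X"
      using dist_geodesic_ends(3,4)[OF p] dist_geodesic_ends(4)[OF q] by auto
    then obtain gp gq gr where g: "dist_geodesic X d x y gp" "dist_geodesic X d y z gq"
      "dist_geodesic X d x z gr"
      using d_geodesic_exists by meson
    then have "dist_thin_triangle \<rho> \<delta> gp gq gr"
      by (rule d_triangles_thin)
    then show ?thesis
      unfolding dist_thin_triangle_def
      using side[OF p g(1) q g(2) r g(3)] side[OF r g(3) q g(2) p g(1)]
        side[OF p g(1) r g(3) q g(2)]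
      by blast
  qed
  then show thesis
    using that by blast
qed
end

section \<open>Units of a cancellative monoid\<close>

lemma (in monoid) cancellative_Units_factors:
  assumes c: "cancellative G" and xy: "x \<in> carrier G" "y \<in> carrier G" "x \<otimes> y \<in> Units G"
  shows "x \<in> Units G" "y \<in> Units G"
proof -
  define z where "z = y \<otimes> inv (x \<otimes> y)"
  have z: "z \<in> carrier G" "x \<otimes> z = \<one>"
    using xy by (simp_all add: z_def m_assoc[symmetric])
  have "x \<otimes> (z \<otimes> x) = x \<otimes> \<one>"
    using xy z by (simp add: m_assoc[symmetric])
  then have "z \<otimes> x = \<one>"
    using c xy(1) z(1) unfolding cancellative_def by (meson m_closed one_closed)
  then show x: "x \<in> Units G"
    using xy(1) z unfolding Units_def by blast
  have "y = inv x \<otimes> (x \<otimes> y)"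
    using x xy by (simp add: m_assoc[symmetric])
  then show "y \<in> Units G"
    using x xy(3) by (metis Units_inv_Units Units_m_closed)
qed

lemma (in monoid) cayley_path_to_unit:
  assumes c: "cancellative G" and A: "A \<subseteq> carrier G"
  shows "dpath (carrier G) (cayley_edge G A) xs \<Longrightarrow> last xs \<in> Units G \<Longrightarrow>
    dpath (Units G) (cayley_edge G (A \<inter> Units G)) xs"
proof (induction xs rule: induct_list012)
  case (3 a b xs)
  then have IH: "dpath (Units G) (cayley_edge G (A \<inter> Units G)) (b # xs)"
    by simp
  then have b: "b \<in> Units G"
    by (auto dest: dpath_set)
  obtain s where s: "s \<in> A" "a \<otimes> s = b" "a \<in> carrier G"
    using "3.prems"(1) by (auto simp: cayley_edge_def)
  then have "a \<in> Units G" "s \<in> Units G"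
    using cancellative_Units_factors[OF c, of a s] A b by auto
  moreover have "cayley_edge G (A \<inter> Units G) a b"
    using s calculation by (auto simp: cayley_edge_def)
  ultimately show ?case
    using IH by simp
qed (auto simp: dpath_def)

lemma (in monoid) foldr_mult_closed: "set ws \<subseteq> carrier G \<Longrightarrow> foldr (\<lambda>a b. a \<otimes> b) ws \<one> \<in> carrier G"
  by (induction ws) auto

lemma (in monoid) ddist_word_le:
  assumes A: "A \<subseteq> carrier G"
  shows "u \<in> carrier G \<Longrightarrow> set ws \<subseteq> A \<Longrightarrow>
    ddist (carrier G) (cayley_edge G A) u (u \<otimes> foldr (\<lambda>a b. a \<otimes> b) ws \<one>) \<le> enat (length ws)"
proof (induction ws arbitrary: u)
  case Nil
  then show ?case by (simp add: ddist_self)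
next
  case (Cons a ws)
  let ?E = "cayley_edge G A" and ?w = "foldr (\<lambda>a b. a \<otimes> b) ws \<one>"
  have a: "a \<in> carrier G" "a \<in> A" "?w \<in> carrier G"
    using Cons.prems A by (auto intro: foldr_mult_closed)
  have ua: "u \<otimes> a \<in> carrier G"
    using Cons.prems(1) a by simp
  have "ddist (carrier G) ?E u (u \<otimes> foldr (\<lambda>a b. a \<otimes> b) (a # ws) \<one>) =
      ddist (carrier G) ?E u ((u \<otimes> a) \<otimes> ?w)"
    using Cons.prems(1) a by (simp add: m_assoc)
  also have "\<dots> \<le> ddist (carrier G) ?E u (u \<otimes> a) + ddist (carrier G) ?E (u \<otimes> a) ((u \<otimes> a) \<otimes> ?w)"
    by (rule ddist_triangle)
  also have "\<dots> \<le> 1 + enat (length ws)"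
  proof (rule add_mono)
    show "ddist (carrier G) ?E u (u \<otimes> a) \<le> 1"
      using Cons.prems(1) a ua by (intro ddist_edge) (auto simp: cayley_edge_def)
    show "ddist (carrier G) ?E (u \<otimes> a) ((u \<otimes> a) \<otimes> ?w) \<le> enat (length ws)"
      using Cons.IH[OF ua] Cons.prems(2) by simp
  qed
  finally show ?case
    by (simp add: one_enat_def)
qed

lemma (in monoid) generate_Units_of_cancellative:
  assumes c: "cancellative G" and A: "monoid_generates G A"
  shows "generate (units_of G) (A \<inter> Units G) = Units G"
proof
  interpret U: group "units_of G"
    by (rule units_group)
  show "generate (units_of G) (A \<inter> Units G) \<subseteq> Units G"
    using U.generate_incl[of "A \<inter> Units G"] by (simp add: units_of_carrier)
  have word: "set ws \<subseteq> A \<Longrightarrow> foldr (\<lambda>a b. a \<otimes> b) ws \<one> \<in> Units G \<Longrightarrow>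
      foldr (\<lambda>a b. a \<otimes> b) ws \<one> \<in> generate (units_of G) (A \<inter> Units G)" for ws
  proof (induction ws)
    case Nil
    show ?case using generate.one[of "units_of G"] by (simp add: units_of_one)
  next
    case (Cons a ws)
    let ?w = "foldr (\<lambda>a b. a \<otimes> b) ws \<one>"
    have ac: "a \<in> carrier G" and wc: "?w \<in> carrier G"
      using Cons.prems(1) A foldr_mult_closed[of ws] by (auto simp: monoid_generates_def)
    have "a \<otimes> ?w \<in> Units G"
      using Cons.prems(2) by simp
    then have a: "a \<in> A \<inter> Units G" and "?w \<in> Units G"
      using cancellative_Units_factors[OF c ac wc] Cons.prems(1) by auto
    then have "?w \<in> generate (units_of G) (A \<inter> Units G)"
      using Cons.IH Cons.prems(1) by simp
    from generate.eng[OF generate.incl[OF a] this] show ?case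
      by (simp add: units_of_mult)
  qed
  show "Units G \<subseteq> generate (units_of G) (A \<inter> Units G)"
  proof
    fix m assume m: "m \<in> Units G"
    then obtain ws where "set ws \<subseteq> A" "m = foldr (\<lambda>a b. a \<otimes> b) ws \<one>"
      using A Units_closed[OF m] unfolding monoid_generates_def by blast
    then show "m \<in> generate (units_of G) (A \<inter> Units G)"
      using word m by blast
  qed
qed

locale cancellative_hyperbolic_monoid = monoid G for G :: "('a, 'b) monoid_scheme" (structure) +
  fixes A :: "'a set" and \<delta> :: nat
  assumes cancellative: "cancellative G" and finite_A: "finite A"
    and generates: "monoid_generates G A"
    and hyperbolic: "strongly_hyperbolic_graph (carrier G) (cayley_edge G A) \<delta>"
begin

definition A_U :: "'a set" where
  "A_U = A \<inter> Units G"

definition A_U_sym :: "'a set" where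
  "A_U_sym = A_U \<union> m_inv (units_of G) ` A_U"

abbreviation E_M :: "'a \<Rightarrow> 'a \<Rightarrow> bool" where
  "E_M \<equiv> cayley_edge G A"

abbreviation E_U :: "'a \<Rightarrow> 'a \<Rightarrow> bool" where
  "E_U \<equiv> cayley_edge (units_of G) A_U_sym"

definition dist_M :: "'a \<Rightarrow> 'a \<Rightarrow> nat" where
  "dist_M x y = the_enat (ddist (carrier G) E_M x y)"

definition dist_U :: "'a \<Rightarrow> 'a \<Rightarrow> nat" where
  "dist_U x y = the_enat (ddist (Units G) E_U x y)"

lemma A_subset: "A \<subseteq> carrier G"
  using generates by (simp add: monoid_generates_def)

lemma A_U_sym_Units: "A_U_sym \<subseteq> Units G"
  by (auto simp: A_U_sym_def A_U_def units_of_inv)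

lemma inv_A_U_sym: "a \<in> A_U_sym \<Longrightarrow> inv a \<in> A_U_sym"
  by (auto simp: A_U_sym_def A_U_def units_of_inv)

lemma E_U_iff: "E_U u v \<longleftrightarrow> u \<in> Units G \<and> (\<exists>a\<in>A_U_sym. u \<otimes> a = v)"
  by (simp add: cayley_edge_def units_of_carrier units_of_mult)

lemma E_U_sym: "E_U u v \<Longrightarrow> E_U v u"
proof -
  assume "E_U u v"
  then obtain a where a: "u \<in> Units G" "a \<in> A_U_sym" "u \<otimes> a = v"
    by (auto simp: E_U_iff)
  then have "a \<in> Units G" "v \<in> Units G"
    using A_U_sym_Units by auto
  moreover have "v \<otimes> inv a = u"
    using a calculation by (auto simp: m_assoc Units_closed)
  ultimately show "E_U v u"
    using inv_A_U_sym[OF a(2)] by (auto simp: E_U_iff)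
qed

lemma ddist_M_Units:
  assumes "x \<in> Units G" "y \<in> Units G"
  shows "ddist (carrier G) E_M x y = enat (dist_M x y)"
proof -
  have xy: "x \<in> carrier G" "inv x \<otimes> y \<in> carrier G"
    using assms by auto
  then obtain ws where ws: "set ws \<subseteq> A" "inv x \<otimes> y = foldr (\<lambda>a b. a \<otimes> b) ws \<one>"
    using generates by (auto simp: monoid_generates_def)
  have "x \<otimes> (inv x \<otimes> y) = y"
    using assms by (simp add: m_assoc[symmetric] Units_closed)
  then have "ddist (carrier G) E_M x y \<le> enat (length ws)"
    using ddist_word_le[OF A_subset xy(1) ws(1)] ws(2) by simp
  then show ?thesis
    by (cases "ddist (carrier G) E_M x y") (auto simp: dist_M_def)
qed

lemma ddist_U_le_M:
  assumes x: "x \<in> Units G" and y: "y \<in> Units G"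
  shows "ddist (Units G) E_U x y \<le> ddist (carrier G) E_M x y"
proof -
  obtain xs where xs: "dpath (carrier G) E_M xs" "hd xs = x" "last xs = y"
    "length xs = Suc (dist_M x y)"
    using ddist_M_Units[OF x y] by (rule ddist_enatE)
  have "dpath (Units G) (cayley_edge G A_U) xs"
    using cayley_path_to_unit[OF cancellative A_subset xs(1)] xs(3) y by (simp add: A_U_def)
  then have "dpath (Units G) E_U xs"
    by (rule dpath_mono) (auto simp: cayley_edge_def units_of_carrier units_of_mult A_U_sym_def)
  from ddist_le_length[OF this] show ?thesis
    using xs ddist_M_Units[OF x y] by simp
qed

lemma ddist_U_Units:
  assumes "x \<in> Units G" "y \<in> Units G"
  shows "ddist (Units G) E_U x y = enat (dist_U x y)"
  using ddist_U_le_M[OF assms] ddist_M_Units[OF assms]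
  by (cases "ddist (Units G) E_U x y") (auto simp: dist_U_def)

lemma dist_U_le_dist_M: "x \<in> Units G \<Longrightarrow> y \<in> Units G \<Longrightarrow> dist_U x y \<le> dist_M x y"
  using ddist_U_le_M[of x y] ddist_U_Units[of x y] ddist_M_Units[of x y] by simp

lemma dist_U_sym: "dist_U x y = dist_U y x"
  unfolding dist_U_def using ddist_sym[of E_U] E_U_sym by metis

lemma E_U_step_bound:
  obtains K where "1 \<le> K" "\<And>u v. u \<in> Units G \<Longrightarrow> E_U u v \<Longrightarrow> ddist (carrier G) E_M u v \<le> enat K"
proof -
  have "\<forall>a\<in>A_U_sym. \<exists>ws. set ws \<subseteq> A \<and> a = foldr (\<lambda>a b. a \<otimes> b) ws \<one>"
  proof
    fix a assume "a \<in> A_U_sym"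
    then have "a \<in> carrier G"
      using A_U_sym_Units by auto
    then show "\<exists>ws. set ws \<subseteq> A \<and> a = foldr (\<lambda>a b. a \<otimes> b) ws \<one>"
      using generates by (simp add: monoid_generates_def)
  qed
  then obtain w where w: "\<And>a. a \<in> A_U_sym \<Longrightarrow> set (w a) \<subseteq> A \<and> a = foldr (\<lambda>a b. a \<otimes> b) (w a) \<one>"
    by metis
  define K where "K = Max (insert 1 ((\<lambda>a. length (w a)) ` A_U_sym))"
  have fin: "finite A_U_sym"
    using finite_A by (simp add: A_U_sym_def A_U_def)
  have "ddist (carrier G) E_M u v \<le> enat K" if u: "u \<in> Units G" and uv: "E_U u v" for u v
  proof -
    obtain a where a: "a \<in> A_U_sym" "u \<otimes> a = v"
      using uv by (auto simp: E_U_iff)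
    then have "ddist (carrier G) E_M u v \<le> enat (length (w a))"
      using ddist_word_le[OF A_subset, of u "w a"] w[OF a(1)] u by auto
    also have "length (w a) \<le> K"
      using fin a(1) by (auto simp: K_def)
    finally show ?thesis by simp
  qed
  moreover have "1 \<le> K"
    using fin by (simp add: K_def)
  ultimately show thesis
    using that by blast
qed

lemma dist_M_le_mult_dist_U:
  obtains K where "1 \<le> K" "\<And>x y. x \<in> Units G \<Longrightarrow> y \<in> Units G \<Longrightarrow> dist_M x y \<le> K * dist_U x y"
proof -
  obtain K where K: "1 \<le> K"
    and step: "\<And>u v. u \<in> Units G \<Longrightarrow> E_U u v \<Longrightarrow> ddist (carrier G) E_M u v \<le> enat K"
    using E_U_step_bound by blast
  have "dist_M x y \<le> K * dist_U x y" if xy: "x \<in> Units G" "y \<in> Units G" for x y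
  proof -
    obtain xs where xs: "dpath (Units G) E_U xs" "hd xs = x" "last xs = y"
      "length xs = Suc (dist_U x y)"
      using ddist_U_Units[OF xy] by (rule ddist_enatE)
    from ddist_le_mult_length[OF xs(1) _ step] show ?thesis
      using xs ddist_M_Units[OF xy] by auto
  qed
  then show thesis
    using that K by blast
qed

lemma M_geodesic_iff:
  "set g \<subseteq> Units G \<Longrightarrow> dgeodesic (carrier G) E_M g \<longleftrightarrow> dist_geodesic (Units G) dist_M (hd g) (last g) g"
  by (rule dgeodesic_iff_dist_geodesic) (auto simp: ddist_M_Units)

lemma U_geodesic_iff:
  "set g \<subseteq> Units G \<Longrightarrow> dgeodesic (Units G) E_U g \<longleftrightarrow> dist_geodesic (Units G) dist_U (hd g) (last g) g"
  by (rule dgeodesic_iff_dist_geodesic) (auto simp: ddist_U_Units)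

lemma M_balls_imp_nbhd_covers:
  assumes "B \<subseteq> Units G" "A1 \<subseteq> Units G" "A2 \<subseteq> Units G"
    and "B \<subseteq> out_ball (carrier G) E_M r A1 \<union> in_ball (carrier G) E_M r A2"
  shows "nbhd_covers dist_U r (A1 \<union> A2) B"
  unfolding nbhd_covers_def
proof
  fix v assume v: "v \<in> B"
  then consider u where "u \<in> A1" "ddist (carrier G) E_M u v \<le> enat r"
    | u where "u \<in> A2" "ddist (carrier G) E_M v u \<le> enat r"
    using assms(4) by (auto simp: out_ball_def in_ball_def)
  then show "\<exists>u\<in>A1 \<union> A2. dist_U u v \<le> r"
  proof cases
    case (1 u)
    then have uv: "u \<in> Units G" "v \<in> Units G"
      using assms v by auto
    then have "dist_M u v \<le> r"
      using 1(2) ddist_M_Units[OF uv] by simp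
    then show ?thesis
      using 1(1) dist_U_le_dist_M[OF uv] by (intro bexI[of _ u]) auto
  next
    case (2 u)
    then have uv: "v \<in> Units G" "u \<in> Units G"
      using assms v by auto
    then have "dist_M v u \<le> r"
      using 2(2) ddist_M_Units[OF uv] by simp
    then show ?thesis
      using 2(1) dist_U_le_dist_M[OF uv] dist_U_sym[of u v] by (intro bexI[of _ u]) auto
  qed
qed

lemma nbhd_covers_imp_U_balls:
  assumes "B \<subseteq> Units G" "A1 \<subseteq> Units G" "A2 \<subseteq> Units G" "nbhd_covers dist_U r (A1 \<union> A2) B"
  shows "B \<subseteq> out_ball (Units G) E_U r A1 \<union> in_ball (Units G) E_U r A2"
proof
  fix v assume v: "v \<in> B"
  then obtain u where u: "u \<in> A1 \<union> A2" "dist_U u v \<le> r"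
    using assms(4) by (auto simp: nbhd_covers_def)
  have uv: "u \<in> Units G" "v \<in> Units G"
    using u(1) assms v by auto
  then have "ddist (Units G) E_U u v \<le> enat r" "ddist (Units G) E_U v u \<le> enat r"
    using u(2) ddist_U_Units[OF uv] ddist_U_Units[OF uv(2,1)] dist_U_sym[of v u] by auto
  then show "v \<in> out_ball (Units G) E_U r A1 \<union> in_ball (Units G) E_U r A2"
    using u assms v by (auto simp: out_ball_def in_ball_def)
qed

lemma M_triangles_thin:
  assumes p: "dist_geodesic (Units G) dist_M x y p" and q: "dist_geodesic (Units G) dist_M y z q"
    and r: "dist_geodesic (Units G) dist_M x z r"
  shows "dist_thin_triangle dist_U \<delta> p q r"
proof -
  have U: "set p \<subseteq> Units G" "set q \<subseteq> Units G" "set r \<subseteq> Units G"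
    using p q r by (simp_all add: dist_geodesic_def)
  have ends: "hd p = x" "last p = y" "hd q = y" "last q = z" "hd r = x" "last r = z"
    using p q r by (simp_all add: dist_geodesic_def)
  have "geodesic_triangle (carrier G) E_M p q r"
    using M_geodesic_iff[OF U(1)] M_geodesic_iff[OF U(2)] M_geodesic_iff[OF U(3)] p q r ends
    by (simp add: geodesic_triangle_def)
  then have "thin_triangle (carrier G) E_M \<delta> p q r"
    using hyperbolic by (simp add: strongly_hyperbolic_graph_def)
  then show ?thesis
    unfolding thin_triangle_def dist_thin_triangle_def
    using M_balls_imp_nbhd_covers[OF U(3,1,2)] M_balls_imp_nbhd_covers[OF U(1,3,2)]
      M_balls_imp_nbhd_covers[OF U(2,1,3)] by blast
qed

lemma thin_quasi_metric_Units: "\<exists>K. thin_quasi_metric (Units G) dist_M dist_U K \<delta>"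
proof -
  obtain K where K: "1 \<le> K" "\<And>x y. x \<in> Units G \<Longrightarrow> y \<in> Units G \<Longrightarrow> dist_M x y \<le> K * dist_U x y"
    using dist_M_le_mult_dist_U by blast
  have "thin_quasi_metric (Units G) dist_M dist_U K \<delta>"
  proof
    fix x y z assume x: "x \<in> Units G" and y: "y \<in> Units G" and z: "z \<in> Units G"
    show "dist_U x z \<le> dist_U x y + dist_U y z"
      using ddist_triangle[of "Units G" E_U x z y] ddist_U_Units x y z by simp
    show "\<exists>g. dist_geodesic (Units G) dist_M x y g"
    proof -
      obtain g where g: "dgeodesic (carrier G) E_M g" "hd g = x" "last g = y"
        using dgeodesic_exists[OF ddist_M_Units[OF x y]] by blast
      have "set g \<subseteq> Units G"
        using cayley_path_to_unit[OF cancellative A_subset] g y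
        by (auto simp: dgeodesic_def dest: dpath_set)
      then show ?thesis
        using M_geodesic_iff g by auto
    qed
    show "\<exists>g. dist_geodesic (Units G) dist_U x y g"
    proof -
      obtain g where g: "dgeodesic (Units G) E_U g" "hd g = x" "last g = y"
        using dgeodesic_exists[OF ddist_U_Units[OF x y]] by blast
      then have "set g \<subseteq> Units G"
        by (auto simp: dgeodesic_def dest: dpath_set)
      then show ?thesis
        using U_geodesic_iff g by auto
    qed
  qed (use K dist_U_le_dist_M dist_U_sym M_triangles_thin Units_closed in
        \<open>auto simp: dist_M_def ddist_self zero_enat_def\<close>)
  then show ?thesis ..
qed

theorem hyperbolic_group_units_of: "hyperbolic_group (units_of G)"
proof -
  obtain K where "thin_quasi_metric (Units G) dist_M dist_U K \<delta>"
    using thin_quasi_metric_Units by blast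
  then obtain \<delta>' where thin: "\<And>x y z p q r. dist_geodesic (Units G) dist_U x y p \<Longrightarrow>
      dist_geodesic (Units G) dist_U y z q \<Longrightarrow> dist_geodesic (Units G) dist_U x z r \<Longrightarrow>
      dist_thin_triangle dist_U \<delta>' p q r"
    using thin_quasi_metric.rho_geodesic_triangles_thin by blast
  have "thin_triangle (Units G) E_U \<delta>' p q r" if "geodesic_triangle (Units G) E_U p q r" for p q r
  proof -
    have U: "set p \<subseteq> Units G" "set q \<subseteq> Units G" "set r \<subseteq> Units G"
      using that by (auto simp: geodesic_triangle_def dgeodesic_def dest: dpath_set)
    have "dist_thin_triangle dist_U \<delta>' p q r"
      using that U_geodesic_iff[OF U(1)] U_geodesic_iff[OF U(2)] U_geodesic_iff[OF U(3)]
      by (intro thin) (auto simp: geodesic_triangle_def)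
    then show ?thesis
      unfolding thin_triangle_def dist_thin_triangle_def
      using nbhd_covers_imp_U_balls[OF U(3,1,2)] nbhd_covers_imp_U_balls[OF U(1,3,2)]
        nbhd_covers_imp_U_balls[OF U(2,1,3)] by blast
  qed
  then have "strongly_hyperbolic_graph (carrier (units_of G)) E_U \<delta>'"
    by (simp add: strongly_hyperbolic_graph_def units_of_carrier)
  moreover have "finite A_U" "A_U \<subseteq> carrier (units_of G)"
    using finite_A by (auto simp: A_U_def units_of_carrier)
  moreover have "generate (units_of G) A_U = carrier (units_of G)"
    using generate_Units_of_cancellative[OF cancellative generates]
    by (simp add: A_U_def units_of_carrier)
  ultimately show ?thesis
    unfolding hyperbolic_group_def A_U_sym_def using units_group by blast
qed

end

theorem corollary4p10:
  fixes M :: "('a, 'b) monoid_scheme"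
  assumes "monoid M"
    and "cancellative M"
    and "strongly_hyperbolic_monoid M"
  shows "hyperbolic_group (units_of M)"
proof -
  obtain A \<delta> where "finite A" "monoid_generates M A"
    "strongly_hyperbolic_graph (carrier M) (cayley_edge M A) \<delta>"
    using assms(3) unfolding strongly_hyperbolic_monoid_def by blast
  then interpret cancellative_hyperbolic_monoid M A \<delta>
    using assms(1,2)
    by (intro cancellative_hyperbolic_monoid.intro cancellative_hyperbolic_monoid_axioms.intro)
  show ?thesis
    by (rule hyperbolic_group_units_of)
qed

end
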